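(* System 2 has exactly four fixed points, the double poles $p_{\varepsilon_1,\varepsilon_2}=((0,0,\varepsilon_11),(0,0,\varepsilon_21))$, $\varepsilon_1,\varepsilon_2\in\{+,-\}$. The fixed points $p_{+,+}$, $p_{-,+}$ and $p_{-,-}$ are non-degenerate of elliptic-elliptic type for all $t\in[0,1]$, while $p_{+,-}$ is non-degenerate of elliptic-elliptic type if $t<t^-$ or $t>t^+$, non-degenerate of focus-focus type if $t^-<t<t^+$, and degenerate if $t\in\{t^-,t^+\}$, where $$t^\pm=\frac{R_2}{2R_2+R_1\mp2\sqrt{R_1R_2}}.$$
   Context: Let $0<R_1<R_2$ and $t\in[0,1]$. On $M=S^2\times S^2$ with Cartesian coordinates $(x_i,y_i,z_i)$, $x_i^2+y_i^2+z_i^2=1$, and cylindrical coordinates $(\theta_i,z_i)$, $\theta_i=\arg(x_i+iy_i)$, System 2 is the $b$-integrable system with $Z=\{z_1=0\}$, $b$-symplectic form $\omega=R_1\frac{dz_1}{z_1}\wedge d\theta_1+R_2\,dz_2\wedge d\theta_2$ (in the local chart $(x_1,y_1,x_2,y_2)$ on $\{\varepsilon_1z_1>0,\varepsilon_2z_2>0\}$: $\omega=-\frac{R_1}{1-x_1^2-y_1^2}dx_1\wedge dy_1-\varepsilon_2\frac{R_2}{\sqrt{1-x_2^2-y_2^2}}dx_2\wedge dy_2$), and $L=R_1\log|z_1|+R_2z_2$, $H=(1-t)\log|z_1|+t(x_1x_2+y_1y_2+z_1z_2)$. A fixed point is a point where $dL=dH=0$. A fixed point $p$ with $\Omega$ the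 matrix of $\omega$ at $p$ is non-degenerate if $A_L=\Omega^{-1}d^2L(p)$, $A_H=\Omega^{-1}d^2H(p)$ span a Cartan subalgebra of $\mathfrak{sp}(4,\mathbb R)$; it is elliptic-elliptic if some combination $c_1A_L+c_2A_H$ has four distinct eigenvalues $\pm i\alpha,\pm i\beta$ ($\alpha\ne\beta$ nonzero reals) and focus-focus if such a combination has eigenvalues $\pm\alpha\pm i\beta$ with $\alpha,\beta$ nonzero reals. *)

theory Defs
  imports "HOL-Analysis.Analysis"
begin

type_synonym pt = "(real \<times> real \<times> real) \<times> (real \<times> real \<times> real)"

definition S2 :: "(real \<times> real \<times> real) set" where
  "S2 = {(x, y, z). x^2 + y^2 + z^2 = 1}"

definition Mspace :: "pt set" where
  "Mspace = S2 \<times> S2"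

definition z1_of :: "pt \<Rightarrow> real" where
  "z1_of p = (case p of ((x1, y1, z1), (x2, y2, z2)) \<Rightarrow> z1)"

text \<open>The integrable system L, H (on M minus Z = {z1 = 0}).\<close>
definition Lfun :: "real \<Rightarrow> real \<Rightarrow> pt \<Rightarrow> real" where
  "Lfun R1 R2 p = (case p of ((x1, y1, z1), (x2, y2, z2)) \<Rightarrow> R1 * ln \<bar>z1\<bar> + R2 * z2)"

definition Hfun :: "real \<Rightarrow> pt \<Rightarrow> real" where
  "Hfun t p = (case p of ((x1, y1, z1), (x2, y2, z2)) \<Rightarrow>
      (1 - t) * ln \<bar>z1\<bar> + t * (x1 * x2 + y1 * y2 + z1 * z2))"

definition is_fixed_point :: "real \<Rightarrow> real \<Rightarrow> real \<Rightarrow> pt \<Rightarrow> bool" where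
  "is_fixed_point R1 R2 t p \<longleftrightarrow>
     p \<in> Mspace \<and> z1_of p \<noteq> 0 \<and>
     (Lfun R1 R2 has_derivative (\<lambda>_. 0)) (at p within Mspace) \<and>
     (Hfun t has_derivative (\<lambda>_. 0)) (at p within Mspace)"

definition pole :: "real \<Rightarrow> real \<Rightarrow> pt" where
  "pole e1 e2 = ((0, 0, e1), (0, 0, e2))"

definition chart_inv :: "real \<Rightarrow> real \<Rightarrow> real^4 \<Rightarrow> pt" where
  "chart_inv e1 e2 u =
     ((u$1, u$2, e1 * sqrt (1 - (u$1)^2 - (u$2)^2)),
      (u$3, u$4, e2 * sqrt (1 - (u$3)^2 - (u$4)^2)))"

definition chart :: "pt \<Rightarrow> real^4" where
  "chart p = (case p of ((x1, y1, z1), (x2, y2, z2)) \<Rightarrow> vector [x1, y1, x2, y2])"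

text \<open>Matrix of the b-symplectic form in the chart (coordinates ordered x1,y1,x2,y2),
  \<Omega>_ij = \<omega>(d_i, d_j).\<close>
definition Omega :: "real \<Rightarrow> real \<Rightarrow> real \<Rightarrow> real^4 \<Rightarrow> real^4^4" where
  "Omega R1 R2 e2 u =
     (let a = - R1 / (1 - (u$1)^2 - (u$2)^2);
          b = - e2 * R2 / sqrt (1 - (u$3)^2 - (u$4)^2)
      in vector [vector [0, a, 0, 0], vector [-a, 0, 0, 0],
                 vector [0, 0, 0, b], vector [0, 0, -b, 0]])"

definition pdiff :: "(real^4 \<Rightarrow> real) \<Rightarrow> 4 \<Rightarrow> real^4 \<Rightarrow> real" where
  "pdiff f i u = deriv (\<lambda>s. f (u + s *\<^sub>R axis i 1)) 0"

definition hessian :: "(real^4 \<Rightarrow> real) \<Rightarrow> real^4 \<Rightarrow> real^4^4" where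
  "hessian f u = (\<chi> i j. pdiff (\<lambda>w. pdiff f j w) i u)"

definition A_L :: "real \<Rightarrow> real \<Rightarrow> real \<Rightarrow> real \<Rightarrow> real^4 \<Rightarrow> real^4^4" where
  "A_L R1 R2 e1 e2 u = matrix_inv (Omega R1 R2 e2 u) ** hessian (Lfun R1 R2 \<circ> chart_inv e1 e2) u"

definition A_H :: "real \<Rightarrow> real \<Rightarrow> real \<Rightarrow> real \<Rightarrow> real \<Rightarrow> real^4 \<Rightarrow> real^4^4" where
  "A_H R1 R2 t e1 e2 u = matrix_inv (Omega R1 R2 e2 u) ** hessian (Hfun t \<circ> chart_inv e1 e2) u"

definition sp_alg :: "real^4^4 \<Rightarrow> (real^4^4) set" where
  "sp_alg Om = {A. transpose A ** Om + Om ** A = 0}"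

definition bracket :: "real^4^4 \<Rightarrow> real^4^4 \<Rightarrow> real^4^4" where
  "bracket X Y = X ** Y - Y ** X"

definition lie_subalgebra :: "(real^4^4) set \<Rightarrow> (real^4^4) set \<Rightarrow> bool" where
  "lie_subalgebra g h \<longleftrightarrow> subspace h \<and> h \<subseteq> g \<and> (\<forall>X\<in>h. \<forall>Y\<in>h. bracket X Y \<in> h)"

fun lower_central :: "(real^4^4) set \<Rightarrow> nat \<Rightarrow> (real^4^4) set" where
  "lower_central h 0 = h"
| "lower_central h (Suc k) = span {bracket X Y | X Y. X \<in> h \<and> Y \<in> lower_central h k}"

definition lie_nilpotent :: "(real^4^4) set \<Rightarrow> bool" where
  "lie_nilpotent h \<longleftrightarrow> (\<exists>k. lower_central h k = {0})"

definition normalizer :: "(real^4^4) set \<Rightarrow> (real^4^4) set \<Rightarrow> (real^4^4) set" where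
  "normalizer g h = {X \<in> g. \<forall>Y\<in>h. bracket X Y \<in> h}"

definition cartan_subalgebra :: "(real^4^4) set \<Rightarrow> (real^4^4) set \<Rightarrow> bool" where
  "cartan_subalgebra g h \<longleftrightarrow> lie_subalgebra g h \<and> lie_nilpotent h \<and> normalizer g h = h"

definition cmat :: "real^4^4 \<Rightarrow> complex^4^4" where
  "cmat A = (\<chi> i j. complex_of_real (A $ i $ j))"

definition eigenvalues :: "real^4^4 \<Rightarrow> complex set" where
  "eigenvalues A = {c. det (cmat A - mat c) = 0}"

definition elliptic_elliptic :: "real^4^4 \<Rightarrow> real^4^4 \<Rightarrow> bool" where
  "elliptic_elliptic A B \<longleftrightarrow>
     (\<exists>c1 c2 \<alpha> \<beta> :: real. \<alpha> \<noteq> 0 \<and> \<beta> \<noteq> 0 \<and> \<alpha> \<noteq> \<beta> \<and>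
        card {Complex 0 \<alpha>, Complex 0 (-\<alpha>), Complex 0 \<beta>, Complex 0 (-\<beta>)} = 4 \<and>
        eigenvalues (c1 *\<^sub>R A + c2 *\<^sub>R B) =
          {Complex 0 \<alpha>, Complex 0 (-\<alpha>), Complex 0 \<beta>, Complex 0 (-\<beta>)})"

definition focus_focus :: "real^4^4 \<Rightarrow> real^4^4 \<Rightarrow> bool" where
  "focus_focus A B \<longleftrightarrow>
     (\<exists>c1 c2 \<alpha> \<beta> :: real. \<alpha> \<noteq> 0 \<and> \<beta> \<noteq> 0 \<and>
        eigenvalues (c1 *\<^sub>R A + c2 *\<^sub>R B) =
          {Complex \<alpha> \<beta>, Complex \<alpha> (-\<beta>), Complex (-\<alpha>) \<beta>, Complex (-\<alpha>) (-\<beta>)})"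

text \<open>Non-degeneracy and type of the fixed point p_{e1,e2} = pole e1 e2, computed in the chart
  on {e1 z1 > 0, e2 z2 > 0}.\<close>
definition nondegenerate_at :: "real \<Rightarrow> real \<Rightarrow> real \<Rightarrow> pt \<Rightarrow> real \<Rightarrow> real \<Rightarrow> bool" where
  "nondegenerate_at R1 R2 t p e1 e2 \<longleftrightarrow>
     cartan_subalgebra (sp_alg (Omega R1 R2 e2 (chart p)))
       (span {A_L R1 R2 e1 e2 (chart p), A_H R1 R2 t e1 e2 (chart p)})"

definition nondeg_EE :: "real \<Rightarrow> real \<Rightarrow> real \<Rightarrow> real \<Rightarrow> real \<Rightarrow> bool" where
  "nondeg_EE R1 R2 t e1 e2 \<longleftrightarrow> nondegenerate_at R1 R2 t (pole e1 e2) e1 e2 \<and>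
     elliptic_elliptic (A_L R1 R2 e1 e2 (chart (pole e1 e2))) (A_H R1 R2 t e1 e2 (chart (pole e1 e2)))"

definition nondeg_FF :: "real \<Rightarrow> real \<Rightarrow> real \<Rightarrow> real \<Rightarrow> real \<Rightarrow> bool" where
  "nondeg_FF R1 R2 t e1 e2 \<longleftrightarrow> nondegenerate_at R1 R2 t (pole e1 e2) e1 e2 \<and>
     focus_focus (A_L R1 R2 e1 e2 (chart (pole e1 e2))) (A_H R1 R2 t e1 e2 (chart (pole e1 e2)))"

definition t_minus :: "real \<Rightarrow> real \<Rightarrow> real" where
  "t_minus R1 R2 = R2 / (2 * R2 + R1 + 2 * sqrt (R1 * R2))"

definition t_plus :: "real \<Rightarrow> real \<Rightarrow> real" where
  "t_plus R1 R2 = R2 / (2 * R2 + R1 - 2 * sqrt (R1 * R2))"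

end

theory Submission
  imports Defs
begin

text \<open>
  Off Z, L has non-zero derivative along a rotation of either sphere that moves the point
  towards or away from its pole, so the only critical points of L are the four double poles,
  and H is critical there as well. In the chart at a pole both linearisations lie in the abelian
  algebra of matrices M \<otimes> J, where J is the rotation generator of each R^2 factor:
  A_L = 1 \<otimes> J and A_H = M \<otimes> J for an explicit 2x2 matrix M. The eigenvalues of
  (c1 + c2 M) \<otimes> J are i times those of c1 + c2 M, so everything is governed by the
  discriminant of M: a positive discriminant gives an elliptic-elliptic point, a negative one a
  focus-focus point, and span {1 \<otimes> J, M \<otimes> J} is a Cartan subalgebra of the
  symplectic algebra exactly when the discriminant does not vanish (M being non-scalar). At
  p_{+,-} the discriminant equals (t^- - t)(t^+ - t)/(R1^2 t^- t^+); at the other poles it is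
  positive for all t.
\<close>

section \<open>Block matrices\<close>

text \<open>In the coordinates (x1, y1, x2, y2), blockJ a b c d and blockI a b c d are the Kronecker
  products of the 2x2 matrix [[a, b], [c, d]] with J = [[0, -1], [1, 0]] and with the identity.
  They multiply like their 2x2 factors, with J^2 = -1.\<close>

definition blockJ :: "real \<Rightarrow> real \<Rightarrow> real \<Rightarrow> real \<Rightarrow> real^4^4" where
  "blockJ a b c d =
     vector [vector [0, -a, 0, -b], vector [a, 0, b, 0], vector [0, -c, 0, -d], vector [c, 0, d, 0]]"

definition blockI :: "real \<Rightarrow> real \<Rightarrow> real \<Rightarrow> real \<Rightarrow> real^4^4" where
  "blockI a b c d =
     vector [vector [a, 0, b, 0], vector [0, a, 0, b], vector [c, 0, d, 0], vector [0, c, 0, d]]"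

lemma vector4_nth:
  "(vector [a, b, c, d] :: 'a::zero^4) $ 1 = a"
  "(vector [a, b, c, d] :: 'a::zero^4) $ 2 = b"
  "(vector [a, b, c, d] :: 'a::zero^4) $ 3 = c"
  "(vector [a, b, c, d] :: 'a::zero^4) $ 4 = d"
  unfolding vector_def by simp_all

lemmas block_simps =
  vec_eq_iff forall_4 matrix_matrix_mult_def sum_4 vector4_nth blockJ_def blockI_def mat_def

lemma blockJ_mult_blockJ:
  "blockJ a b c d ** blockJ a' b' c' d' =
     blockI (-(a*a' + b*c')) (-(a*b' + b*d')) (-(c*a' + d*c')) (-(c*b' + d*d'))"
  by (simp add: block_simps algebra_simps)

lemma blockJ_mult_blockI:
  "blockJ a b c d ** blockI a' b' c' d' =
     blockJ (a*a' + b*c') (a*b' + b*d') (c*a' + d*c') (c*b' + d*d')"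
  by (simp add: block_simps algebra_simps)

lemma blockI_mult_blockJ:
  "blockI a b c d ** blockJ a' b' c' d' =
     blockJ (a*a' + b*c') (a*b' + b*d') (c*a' + d*c') (c*b' + d*d')"
  by (simp add: block_simps algebra_simps)

lemma blockI_one: "blockI 1 0 0 1 = mat 1"
  by (simp add: block_simps)

lemma blockI_zero: "blockI 0 0 0 0 = 0"
  by (simp add: block_simps)

lemma blockJ_pencil:
  "u *\<^sub>R blockJ 1 0 0 1 + v *\<^sub>R blockJ m11 m12 m21 m22 =
     blockJ (u + v * m11) (v * m12) (v * m21) (u + v * m22)"
  by (simp add: block_simps)

lemma blockJ_eq_iff: "blockJ a b c d = blockJ a' b' c' d' \<longleftrightarrow> a = a' \<and> b = b' \<and> c = c' \<and> d = d'"
  by (simp add: block_simps) (auto; linarith)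

lemma blockJ_add_blockI_eq_blockJ_iff:
  "blockJ a b c d + blockI e f g h = blockJ a' b' c' d' \<longleftrightarrow>
     a = a' \<and> b = b' \<and> c = c' \<and> d = d' \<and> e = 0 \<and> f = 0 \<and> g = 0 \<and> h = 0"
  by (simp add: block_simps) (auto; linarith)

lemma blockI_neq_blockJ: "b \<noteq> 0 \<Longrightarrow> blockI a b c d \<noteq> blockJ a' b' c' d'"
  by (simp add: block_simps)

lemma transpose_blockI: "transpose (blockI a b c d) = blockI a c b d"
  by (simp add: block_simps transpose_def)

lemma matrix_add_rdistrib: "(A + B) ** C = A ** C + B ** (C :: 'a::semiring_1^'n^'m)"
  by (vector matrix_matrix_mult_def sum.distrib[symmetric] field_simps)

lemma transpose_add: "transpose (A + B) = transpose A + transpose (B :: 'a::semiring_1^'n^'m)"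
  by (simp add: vec_eq_iff transpose_def)

lemma bracket_add_left: "bracket (X + Y) Z = bracket X Z + bracket Y Z"
  by (simp add: bracket_def matrix_add_rdistrib matrix_add_ldistrib)

lemma bracket_blockJ_blockJ:
  "bracket (blockJ a b c d) (blockJ a' b' c' d') =
     blockI (a'*a + b'*c - (a*a' + b*c')) (a'*b + b'*d - (a*b' + b*d'))
            (c'*a + d'*c - (c*a' + d*c')) (c'*b + d'*d - (c*b' + d*d'))"
  unfolding bracket_def blockJ_mult_blockJ by (simp add: block_simps)

lemma bracket_blockI_blockJ:
  "bracket (blockI a b c d) (blockJ a' b' c' d') =
     blockJ (a*a' + b*c' - (a'*a + b'*c)) (a*b' + b*d' - (a'*b + b'*d))
            (c*a' + d*c' - (c'*a + d'*c)) (c*b' + d*d' - (c'*b + d'*d))"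
  unfolding bracket_def blockI_mult_blockJ blockJ_mult_blockI by (simp add: block_simps)

lemma span_pair: "x \<in> span {a, b} \<longleftrightarrow> (\<exists>u v. x = u *\<^sub>R a + v *\<^sub>R (b :: 'a::real_vector))"
  unfolding insert_is_Un[of a "{b}"] span_Un span_singleton by blast

section \<open>Cartan subalgebras spanned by two block matrices\<close>

definition discr :: "real \<Rightarrow> real \<Rightarrow> real \<Rightarrow> real \<Rightarrow> real" where
  "discr m11 m12 m21 m22 = (m11 - m22)^2 + 4 * m12 * m21"

text \<open>The hypotheses say that [[r11, r12], [r21, r22]] commutes with M = [[m11, m12], [m21, m22]];
  with a non-zero discriminant M has distinct eigenvalues, so its commutant is spanned by 1 and M.\<close>

lemma commuting_2x2_in_pencil:
  fixes m11 m12 m21 m22 r11 r12 r21 r22 :: real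
  assumes disc: "discr m11 m12 m21 m22 \<noteq> 0"
    and "r12*m21 = m12*r21" "r11*m12 + r12*m22 = m11*r12 + m12*r22"
    and "r21*m11 + r22*m21 = m21*r11 + m22*r21"
  shows "\<exists>\<alpha> \<beta>. r11 = \<alpha> + \<beta>*m11 \<and> r12 = \<beta>*m12 \<and> r21 = \<beta>*m21 \<and> r22 = \<alpha> + \<beta>*m22"
proof -
  consider (m12) "m12 \<noteq> 0" | (m21) "m12 = 0" "m21 \<noteq> 0" | (diag) "m12 = 0" "m21 = 0" "m11 \<noteq> m22"
    using disc by (force simp: discr_def)
  then obtain \<beta> where \<beta>: "r12 = \<beta>*m12" "r21 = \<beta>*m21" "r22 - r11 = \<beta>*(m22 - m11)"
  proof cases
    case m12
    define \<beta> where "\<beta> = r12/m12"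
    have "r12 = \<beta>*m12" using m12 by (simp add: \<beta>_def)
    moreover from this have "m12*r21 = m12*(\<beta>*m21)" "m12*(r22 - r11) = m12*(\<beta>*(m22 - m11))"
      using assms(2,3) by algebra+
    ultimately show thesis using m12 that by simp
  next
    case m21
    define \<beta> where "\<beta> = r21/m21"
    have "r21 = \<beta>*m21" using m21 by (simp add: \<beta>_def)
    moreover from this have "m21*r12 = m21*(\<beta>*m12)" "m21*(r22 - r11) = m21*(\<beta>*(m22 - m11))"
      using assms(2,4) m21 by algebra+
    ultimately show thesis using m21 that by simp
  next
    case diag
    then have "r12*(m11 - m22) = 0" "r21*(m11 - m22) = 0" using assms(3,4) by algebra+
    then show thesis using diag
      by (intro that[of "(r22 - r11)/(m22 - m11)"]) (simp_all add: field_simps)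
  qed
  then show ?thesis
    by (intro exI[of _ "r11 - \<beta>*m11"] exI[of _ \<beta>]) (simp add: algebra_simps)
qed

text \<open>Here [[0, p], [q, 0]] is the blockI part of an element normalising the pencil, and
  w1 p + w2 q = 0 is what the symplectic condition leaves of it.\<close>

lemma antidiagonal_commutator_in_pencil_zero:
  fixes w1 w2 m11 m12 m21 m22 p q a b :: real
  assumes w: "w1 \<noteq> 0" "w2 \<noteq> 0" "w1*m12 = w2*m21" and disc: "discr m11 m12 m21 m22 \<noteq> 0"
    and pq: "w1*p + w2*q = 0"
    and "p*m21 - m12*q = a + b*m11" "p*(m22 - m11) = b*m12"
    and "q*(m11 - m22) = b*m21" "q*m12 - m21*p = a + b*m22"
  shows "p = 0"
proof -
  let ?d = "m11 - m22"
  have e14: "2*(p*m21 - q*m12) = b*?d" using assms(6,9) by (simp add: algebra_simps)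
  show ?thesis
  proof (cases "?d = 0")
    case False
    have "b*(2*(p*m21 - q*m12)) = b*b*?d" using e14 by simp
    then have "4*p*q*?d = b*b*?d" using assms(7,8) by algebra
    then have bb: "b*b = 4*p*q" using False by simp
    have "(b*m12)*(b*m21) = -(p*q*?d*?d)" using assms(7,8) by algebra
    then have "p*q * discr m11 m12 m21 m22 = 0" using bb unfolding discr_def by algebra
    then have "p*q = 0" using disc by simp
    then show ?thesis using w pq by (auto simp: field_simps)
  next
    case True
    then have m12: "m12 \<noteq> 0" using disc by (auto simp: discr_def)
    have "p*m21 = q*m12" using e14 True by simp
    then have "p*(w2*m21 + w1*m12) = 0" using pq by algebra
    then have "p*(2*w1*m12) = 0" using w(3) by algebra
    then show ?thesis using w(1) m12 by simp
  qed
qed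

lemma subspace_sp_alg: "subspace (sp_alg Om)"
proof -
  have "linear (\<lambda>A :: real^4^4. transpose A ** Om + Om ** A)"
    by (rule linearI)
      (simp_all add: transpose_add matrix_add_rdistrib matrix_add_ldistrib transpose_scalar
        scalar_matrix_assoc[symmetric] matrix_scalar_ac scaleR_add_right)
  then show ?thesis
    unfolding sp_alg_def by (rule linear_subspace_kernel)
qed

lemma blockJ_in_sp_alg: "w1*m12 = w2*m21 \<Longrightarrow> blockJ m11 m12 m21 m22 \<in> sp_alg (blockJ w1 0 0 w2)"
  unfolding sp_alg_def by (simp add: block_simps transpose_def algebra_simps)

lemma blockI_add_blockJ_in_sp_alg_imp:
  assumes "blockI p11 p12 p21 p22 + blockJ r11 r12 r21 r22 \<in> sp_alg (blockJ w1 0 0 w2)"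
  shows "w1*p11 = 0 \<and> w2*p22 = 0 \<and> w1*p12 + w2*p21 = 0"
  using assms unfolding sp_alg_def by (simp add: block_simps transpose_def algebra_simps)

lemma block_form_if_bracket_blockJ_one:
  assumes "bracket X (blockJ 1 0 0 1) = blockJ c11 c12 c21 c22"
  shows "X = blockI (X$1$1) (X$1$3) (X$3$1) (X$3$3) + blockJ (X$2$1) (X$2$3) (X$4$1) (X$4$3)"
  using assms unfolding bracket_def by (simp add: block_simps)

lemma bracket_pencil_zero:
  assumes "X \<in> span {blockJ 1 0 0 1, blockJ m11 m12 m21 m22}"
    and "Y \<in> span {blockJ 1 0 0 1, blockJ m11 m12 m21 m22}"
  shows "bracket X Y = 0"
proof -
  obtain u v u' v' where
    "X = blockJ (u + v * m11) (v * m12) (v * m21) (u + v * m22)"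
    "Y = blockJ (u' + v' * m11) (v' * m12) (v' * m21) (u' + v' * m22)"
    using assms unfolding span_pair blockJ_pencil by blast
  then show ?thesis
    by (simp add: bracket_blockJ_blockJ blockI_zero[symmetric] algebra_simps)
qed

lemma normalizer_pencil_subset:
  fixes X :: "real^4^4"
  assumes w: "w1 \<noteq> 0" "w2 \<noteq> 0" "w1*m12 = w2*m21" and disc: "discr m11 m12 m21 m22 \<noteq> 0"
    and X: "X \<in> sp_alg (blockJ w1 0 0 w2)"
    and one: "bracket X (blockJ 1 0 0 1) \<in> span {blockJ 1 0 0 1, blockJ m11 m12 m21 m22}"
    and M: "bracket X (blockJ m11 m12 m21 m22) \<in> span {blockJ 1 0 0 1, blockJ m11 m12 m21 m22}"
  shows "X \<in> span {blockJ 1 0 0 1, blockJ m11 m12 m21 m22}"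
proof -
  obtain p11 p12 p21 p22 r11 r12 r21 r22
    where X_eq: "X = blockI p11 p12 p21 p22 + blockJ r11 r12 r21 r22"
    using one block_form_if_bracket_blockJ_one unfolding span_pair blockJ_pencil by blast
  have p: "p11 = 0" "p22 = 0" "w1*p12 + w2*p21 = 0"
    using blockI_add_blockJ_in_sp_alg_imp[OF X[unfolded X_eq]] w by auto
  obtain a b
    where "bracket X (blockJ m11 m12 m21 m22) = a *\<^sub>R blockJ 1 0 0 1 + b *\<^sub>R blockJ m11 m12 m21 m22"
    using M unfolding span_pair by blast
  note components = this[unfolded X_eq bracket_add_left bracket_blockI_blockJ bracket_blockJ_blockJ
      blockJ_pencil blockJ_add_blockI_eq_blockJ_iff p(1,2)]
  have J_part: "p12*m21 - m12*p21 = a + b*m11" "p12*(m22 - m11) = b*m12"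
      "p21*(m11 - m22) = b*m21" "p21*m12 - m21*p12 = a + b*m22"
    using components by algebra+
  have I_part: "r12*m21 = m12*r21" "r11*m12 + r12*m22 = m11*r12 + m12*r22"
      "r21*m11 + r22*m21 = m21*r11 + m22*r21"
    using components by algebra+
  have "p12 = 0"
    by (rule antidiagonal_commutator_in_pencil_zero[OF w disc p(3) J_part])
  then have "p21 = 0" using p(3) w by simp
  obtain \<alpha> \<beta> where "r11 = \<alpha> + \<beta>*m11" "r12 = \<beta>*m12" "r21 = \<beta>*m21" "r22 = \<alpha> + \<beta>*m22"
    using commuting_2x2_in_pencil[OF disc I_part] by blast
  then have "X = \<alpha> *\<^sub>R blockJ 1 0 0 1 + \<beta> *\<^sub>R blockJ m11 m12 m21 m22"
    unfolding X_eq blockJ_pencil using p \<open>p12 = 0\<close> \<open>p21 = 0\<close> by (simp add: blockI_zero)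
  then show ?thesis unfolding span_pair by blast
qed

lemma cartan_pencil:
  assumes w: "w1 \<noteq> 0" "w2 \<noteq> 0" "w1*m12 = w2*m21" and disc: "discr m11 m12 m21 m22 \<noteq> 0"
  shows "cartan_subalgebra (sp_alg (blockJ w1 0 0 w2)) (span {blockJ 1 0 0 1, blockJ m11 m12 m21 m22})"
proof -
  let ?h = "span {blockJ 1 0 0 1, blockJ m11 m12 m21 m22}"
  let ?g = "sp_alg (blockJ w1 0 0 w2)"
  have "?h \<subseteq> ?g"
    by (rule span_minimal[OF _ subspace_sp_alg]) (use w in \<open>auto intro!: blockJ_in_sp_alg\<close>)
  with bracket_pencil_zero have subalg: "lie_subalgebra ?g ?h" and "?h \<subseteq> normalizer ?g ?h"
    unfolding lie_subalgebra_def normalizer_def by (auto simp: span_zero)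
  have "{bracket X Y |X Y. X \<in> ?h \<and> Y \<in> lower_central ?h 0} = {0}"
    using bracket_pencil_zero span_zero by fastforce
  then have "lie_nilpotent ?h"
    unfolding lie_nilpotent_def by (intro exI[of _ 1]) simp
  moreover have "normalizer ?g ?h \<subseteq> ?h"
    using normalizer_pencil_subset[OF w disc] unfolding normalizer_def by (auto intro: span_base)
  ultimately show ?thesis
    using subalg \<open>?h \<subseteq> normalizer ?g ?h\<close> unfolding cartan_subalgebra_def by blast
qed

lemma bracket_antidiagonal_in_degenerate_pencil:
  assumes disc: "discr m11 m12 m21 m22 = 0" and m12: "m12 \<noteq> 0" and qm: "q*m12 = -m21"
    and Y: "Y \<in> span {blockJ 1 0 0 1, blockJ m11 m12 m21 m22}"
  shows "bracket (blockI 0 1 q 0) Y \<in> span {blockJ 1 0 0 1, blockJ m11 m12 m21 m22}"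
proof -
  define b where "b = (m22 - m11)/m12"
  define a where "a = m21 - q*m12 - b*m11"
  have bm12: "b*m12 = m22 - m11"
    using m12 unfolding b_def by simp
  have "m12*(b*m21) = m12*(q*(m11 - m22))"
    using bm12 qm by algebra
  then have bm21: "b*m21 = q*(m11 - m22)"
    using m12 by simp
  have "m12*(a + b*m22) = m12*(q*m12 - m21)"
    unfolding a_def using bm12 qm disc[unfolded discr_def] by algebra
  then have a22: "a + b*m22 = q*m12 - m21"
    using m12 by simp
  obtain u v where Y: "Y = blockJ (u + v * m11) (v * m12) (v * m21) (u + v * m22)"
    using Y unfolding span_pair blockJ_pencil by blast
  have "bracket (blockI 0 1 q 0) Y =
      blockJ (v * (m21 - q*m12)) (v * (m22 - m11)) (v * (q*(m11 - m22))) (v * (q*m12 - m21))"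
    unfolding Y bracket_blockI_blockJ blockJ_eq_iff by (simp add: algebra_simps)
  also have "\<dots> = blockJ (v * (a + b*m11)) (v * (b*m12)) (v * (b*m21)) (v * (a + b*m22))"
    unfolding bm12 bm21 a22 by (simp add: a_def)
  also have "\<dots> = (v * a) *\<^sub>R blockJ 1 0 0 1 + (v * b) *\<^sub>R blockJ m11 m12 m21 m22"
    unfolding blockJ_pencil by (simp add: algebra_simps)
  finally show ?thesis
    unfolding span_pair by blast
qed

text \<open>When the discriminant vanishes but M is not scalar, the antidiagonal element blockI 0 1 q 0
  of the symplectic algebra normalises the pencil without belonging to it.\<close>

lemma not_cartan_pencil:
  assumes w: "w1 \<noteq> 0" "w2 \<noteq> 0" "w1*m12 = w2*m21" and disc: "discr m11 m12 m21 m22 = 0"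
    and m12: "m12 \<noteq> 0"
  shows "\<not> cartan_subalgebra (sp_alg (blockJ w1 0 0 w2)) (span {blockJ 1 0 0 1, blockJ m11 m12 m21 m22})"
proof
  let ?h = "span {blockJ 1 0 0 1, blockJ m11 m12 m21 m22}"
  let ?g = "sp_alg (blockJ w1 0 0 w2)"
  assume cartan: "cartan_subalgebra ?g ?h"
  define q where "q = -w1/w2"
  have qm: "q*m12 = -m21" and wq: "w1 + w2*q = 0"
    using w unfolding q_def by (simp_all add: field_simps)
  have "blockI 0 1 q 0 \<in> ?g"
    unfolding sp_alg_def using wq by (simp add: block_simps transpose_def algebra_simps)
  then have "blockI 0 1 q 0 \<in> normalizer ?g ?h"
    unfolding normalizer_def using bracket_antidiagonal_in_degenerate_pencil[OF disc m12 qm] by blast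
  moreover have "blockI 0 1 q 0 \<notin> ?h"
    unfolding span_pair blockJ_pencil using blockI_neq_blockJ[of 1] by auto
  ultimately show False
    using cartan unfolding cartan_subalgebra_def by blast
qed

section \<open>Eigenvalues of block matrices\<close>

lemma det_4:
  "det (A::'a::comm_ring_1^4^4) =
     A$1$1 * A$2$2 * A$3$3 * A$4$4 - A$1$1 * A$2$2 * A$3$4 * A$4$3 - A$1$1 * A$2$3 * A$3$2 * A$4$4
     + A$1$1 * A$2$3 * A$3$4 * A$4$2 + A$1$1 * A$2$4 * A$3$2 * A$4$3 - A$1$1 * A$2$4 * A$3$3 * A$4$2
     - A$1$2 * A$2$1 * A$3$3 * A$4$4 + A$1$2 * A$2$1 * A$3$4 * A$4$3 + A$1$2 * A$2$3 * A$3$1 * A$4$4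
     - A$1$2 * A$2$3 * A$3$4 * A$4$1 - A$1$2 * A$2$4 * A$3$1 * A$4$3 + A$1$2 * A$2$4 * A$3$3 * A$4$1
     + A$1$3 * A$2$1 * A$3$2 * A$4$4 - A$1$3 * A$2$1 * A$3$4 * A$4$2 - A$1$3 * A$2$2 * A$3$1 * A$4$4
     + A$1$3 * A$2$2 * A$3$4 * A$4$1 + A$1$3 * A$2$4 * A$3$1 * A$4$2 - A$1$3 * A$2$4 * A$3$2 * A$4$1
     - A$1$4 * A$2$1 * A$3$2 * A$4$3 + A$1$4 * A$2$1 * A$3$3 * A$4$2 + A$1$4 * A$2$2 * A$3$1 * A$4$3
     - A$1$4 * A$2$2 * A$3$3 * A$4$1 - A$1$4 * A$2$3 * A$3$1 * A$4$2 + A$1$4 * A$2$3 * A$3$2 * A$4$1"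
proof -
  have f1: "finite {2::4, 3, 4}" "1 \<notin> {2::4, 3, 4}" by auto
  have f2: "finite {3::4, 4}" "2 \<notin> {3::4, 4}" by auto
  have f3: "finite {4::4}" "3 \<notin> {4::4}" by auto
  show ?thesis
    unfolding det_def UNIV_4
    unfolding sum_over_permutations_insert[OF f1]
    unfolding sum_over_permutations_insert[OF f2]
    unfolding sum_over_permutations_insert[OF f3]
    unfolding permutes_sing
    by (simp add: sign_swap_id permutation_swap_id sign_compose permutation_compose sign_id
        swap_id_eq algebra_simps)
qed

lemma charpoly_blockJ:
  "det (cmat (blockJ a b c d) - mat x) =
     x^4 + complex_of_real ((a + d)^2 - 2*(a*d - b*c)) * x^2 + complex_of_real ((a*d - b*c)^2)"
  by (simp add: det_4 cmat_def blockJ_def vector4_nth mat_def)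
    (simp add: algebra_simps power2_eq_square power4_eq_xxxx)

lemma eigenvalues_blockJ_imaginary:
  assumes "\<alpha> + \<beta> = a + d" "\<alpha> * \<beta> = a*d - b*c"
  shows "eigenvalues (blockJ a b c d) = {Complex 0 \<alpha>, Complex 0 (-\<alpha>), Complex 0 \<beta>, Complex 0 (-\<beta>)}"
proof -
  have pair: "(x - Complex 0 \<gamma>) * (x - Complex 0 (-\<gamma>)) = x^2 + complex_of_real (\<gamma>^2)" for x \<gamma>
    by (simp add: complex_eq_iff power2_eq_square algebra_simps)
  have "(a + d)^2 - 2*(a*d - b*c) = \<alpha>^2 + \<beta>^2" "(a*d - b*c)^2 = \<alpha>^2 * \<beta>^2"
    unfolding assms[symmetric] by (simp_all add: power2_eq_square algebra_simps)
  then have "det (cmat (blockJ a b c d) - mat x) =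
      ((x - Complex 0 \<alpha>) * (x - Complex 0 (-\<alpha>))) * ((x - Complex 0 \<beta>) * (x - Complex 0 (-\<beta>)))" for x
    unfolding charpoly_blockJ pair by (simp add: algebra_simps power2_eq_square power4_eq_xxxx)
  then show ?thesis
    unfolding eigenvalues_def by (auto simp: mult.assoc[symmetric])
qed

lemma eigenvalues_blockJ_complex:
  assumes "2*\<beta> = a + d" "\<alpha>^2 + \<beta>^2 = a*d - b*c"
  shows "eigenvalues (blockJ a b c d) =
    {Complex \<alpha> \<beta>, Complex \<alpha> (-\<beta>), Complex (-\<alpha>) \<beta>, Complex (-\<alpha>) (-\<beta>)}"
proof -
  have pair: "(x - Complex \<alpha> \<gamma>) * (x - Complex (-\<alpha>) (-\<gamma>)) = x^2 - Complex (\<alpha>^2 - \<gamma>^2) (2*\<alpha>*\<gamma>)"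
    for x \<gamma> by (simp add: complex_eq_iff power2_eq_square algebra_simps)
  have conj_pair: "(y - Complex u v) * (y - Complex u (-v)) =
      y^2 - complex_of_real (2*u) * y + complex_of_real (u^2 + v^2)" for y u v
    by (simp add: complex_eq_iff power2_eq_square algebra_simps)
  have coeffs: "(a + d)^2 - 2*(a*d - b*c) = - (2 * (\<alpha>^2 - \<beta>^2))"
      "(a*d - b*c)^2 = (\<alpha>^2 - \<beta>^2)^2 + (2*\<alpha>*\<beta>)^2"
    unfolding assms[symmetric] by (simp_all add: power2_eq_square algebra_simps)
  have "det (cmat (blockJ a b c d) - mat x) =
      ((x - Complex \<alpha> \<beta>) * (x - Complex (-\<alpha>) (-\<beta>))) * ((x - Complex \<alpha> (-\<beta>)) * (x - Complex (-\<alpha>) \<beta>))"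
    for x
  proof -
    have "((x - Complex \<alpha> \<beta>) * (x - Complex (-\<alpha>) (-\<beta>))) * ((x - Complex \<alpha> (-\<beta>)) * (x - Complex (-\<alpha>) \<beta>))
      = (x^2 - Complex (\<alpha>^2 - \<beta>^2) (2*\<alpha>*\<beta>)) * (x^2 - Complex (\<alpha>^2 - \<beta>^2) (-(2*\<alpha>*\<beta>)))"
      using pair[of x \<beta>] pair[of x "-\<beta>"] by simp
    also have "\<dots> = (x^2)^2 - complex_of_real (2*(\<alpha>^2 - \<beta>^2)) * x^2
        + complex_of_real ((\<alpha>^2 - \<beta>^2)^2 + (2*\<alpha>*\<beta>)^2)"
      by (rule conj_pair)
    finally show ?thesis
      unfolding charpoly_blockJ coeffs by (simp add: algebra_simps power2_eq_square power4_eq_xxxx)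
  qed
  then show ?thesis
    unfolding eigenvalues_def by (auto simp: mult.assoc[symmetric])
qed

text \<open>The multiple c of the identity added to M shifts both eigenvalues of c + M away from 0
  (and, in the real case, makes them positive, hence of distinct absolute value).\<close>

lemma elliptic_elliptic_pencil:
  assumes disc: "discr m11 m12 m21 m22 > 0"
  shows "elliptic_elliptic (blockJ 1 0 0 1) (blockJ m11 m12 m21 m22)"
proof -
  define s where "s = sqrt (discr m11 m12 m21 m22)"
  have s: "s > 0" "s * s = (m11 - m22)^2 + 4 * m12 * m21"
    using disc unfolding s_def discr_def by simp_all
  define c where "c = \<bar>m11 + m22\<bar> + s + 1"
  define \<alpha> where "\<alpha> = c + (m11 + m22 - s) / 2"
  define \<beta> where "\<beta> = c + (m11 + m22 + s) / 2"
  have "\<alpha> > 0"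
    unfolding \<alpha>_def c_def using s(1) by (simp add: abs_if field_simps)
  moreover have "\<beta> > \<alpha>"
    unfolding \<alpha>_def \<beta>_def using s(1) by simp
  moreover have "2*\<alpha> = 2*c + m11 + m22 - s" "2*\<beta> = 2*c + m11 + m22 + s"
    unfolding \<alpha>_def \<beta>_def by simp_all
  then have "\<alpha> + \<beta> = (c + m11) + (c + m22)" "\<alpha> * \<beta> = (c + m11) * (c + m22) - m12 * m21"
    using s(2) by algebra+
  then have "eigenvalues (c *\<^sub>R blockJ 1 0 0 1 + 1 *\<^sub>R blockJ m11 m12 m21 m22) =
      {Complex 0 \<alpha>, Complex 0 (-\<alpha>), Complex 0 \<beta>, Complex 0 (-\<beta>)}"
    unfolding blockJ_pencil by (intro eigenvalues_blockJ_imaginary) simp_all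
  ultimately show ?thesis
    unfolding elliptic_elliptic_def
    by (intro exI[of _ c] exI[of _ 1] exI[of _ \<alpha>] exI[of _ \<beta>] conjI) simp_all
qed

lemma focus_focus_pencil:
  assumes disc: "discr m11 m12 m21 m22 < 0"
  shows "focus_focus (blockJ 1 0 0 1) (blockJ m11 m12 m21 m22)"
proof -
  define s where "s = sqrt (- discr m11 m12 m21 m22)"
  have s: "s > 0" "s * s = - ((m11 - m22)^2 + 4 * m12 * m21)"
    using disc unfolding s_def discr_def by simp_all
  define c where "c = \<bar>m11 + m22\<bar> + 1"
  define \<alpha> where "\<alpha> = s / 2"
  define \<beta> where "\<beta> = c + (m11 + m22) / 2"
  have "2*\<beta> = (c + m11) + (c + m22)"
    unfolding \<beta>_def by simp
  moreover have "\<alpha>^2 + \<beta>^2 = (c + m11) * (c + m22) - m12 * m21"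
    unfolding \<alpha>_def \<beta>_def using s(2) by (simp add: power2_eq_square field_simps)
  ultimately have "eigenvalues (c *\<^sub>R blockJ 1 0 0 1 + 1 *\<^sub>R blockJ m11 m12 m21 m22) =
      {Complex \<alpha> \<beta>, Complex \<alpha> (-\<beta>), Complex (-\<alpha>) \<beta>, Complex (-\<alpha>) (-\<beta>)}"
    unfolding blockJ_pencil by (intro eigenvalues_blockJ_complex) simp_all
  moreover have "\<alpha> \<noteq> 0"
    unfolding \<alpha>_def using s(1) by simp
  moreover have "\<beta> > 0"
    unfolding \<beta>_def c_def by (simp add: abs_if field_simps)
  ultimately show ?thesis
    unfolding focus_focus_def
    by (intro exI[of _ c] exI[of _ 1] exI[of _ \<alpha>] exI[of _ \<beta>] conjI) simp_all
qed

section \<open>Second derivatives in the chart\<close>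

lemma has_derivative_vec_nth [derivative_intros]:
  "((\<lambda>w::'a::real_normed_vector^'n. w $ i) has_derivative (\<lambda>h. h $ i)) F"
  by (rule bounded_linear.has_derivative[OF bounded_linear_vec_nth has_derivative_ident])

definition chart_domain :: "(real^4) set" where
  "chart_domain = {w. (w$1)^2 + (w$2)^2 < 1 \<and> (w$3)^2 + (w$4)^2 < 1}"

lemma open_chart_domain: "open chart_domain"
  unfolding chart_domain_def by (intro open_Collect_conj open_Collect_less continuous_intros)

lemma zero_in_chart_domain: "0 \<in> chart_domain"
  by (simp add: chart_domain_def)

lemma has_field_derivative_along_axis:
  fixes f :: "real^4 \<Rightarrow> real"
  assumes "(f has_derivative (\<lambda>h. c \<bullet> h)) (at w)"
  shows "((\<lambda>s. f (w + s *\<^sub>R axis i 1)) has_field_derivative c $ i) (at 0)"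
proof -
  have "((\<lambda>s::real. w + s *\<^sub>R axis i 1) has_derivative (\<lambda>s. s *\<^sub>R axis i 1)) (at 0)"
    by (auto intro!: derivative_eq_intros)
  moreover have "(f has_derivative (\<lambda>h. c \<bullet> h)) (at (w + 0 *\<^sub>R axis i 1))"
    using assms by simp
  ultimately have "((\<lambda>s. f (w + s *\<^sub>R axis i 1)) has_derivative (\<lambda>s. c \<bullet> (s *\<^sub>R axis i 1))) (at 0)"
    by (rule has_derivative_compose)
  moreover have "(\<lambda>s. c \<bullet> (s *\<^sub>R axis i 1)) = (*) (c $ i)"
    by (rule ext) (simp add: inner_axis)
  ultimately show ?thesis
    by (simp add: has_field_derivative_def)
qed

lemma pdiff_eq_gradient_nth:
  assumes "(F has_derivative (\<lambda>h. G \<bullet> h)) (at w)"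
  shows "pdiff F j w = G $ j"
  unfolding pdiff_def using has_field_derivative_along_axis[OF assms] by (rule DERIV_imp_deriv)

lemma hessian_eqI:
  fixes F :: "real^4 \<Rightarrow> real" and G :: "real^4 \<Rightarrow> real^4" and Hm :: "real^4^4"
  assumes S: "open S" "u \<in> S"
    and dF: "\<And>w. w \<in> S \<Longrightarrow> (F has_derivative (\<lambda>h. G w \<bullet> h)) (at w)"
    and dG: "\<And>j. ((\<lambda>w. G w $ j) has_derivative (\<lambda>h. Hm $ j \<bullet> h)) (at u)"
  shows "hessian F u = transpose Hm"
proof -
  have "hessian F u $ i $ j = Hm $ j $ i" for i j
  proof -
    let ?T = "{s::real. u + s *\<^sub>R axis i 1 \<in> S}"
    have "open ?T"
      using open_vimage[OF S(1), of "\<lambda>s::real. u + s *\<^sub>R axis i 1"]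
      by (simp add: vimage_def continuous_on_add continuous_on_const continuous_on_scaleR continuous_on_id)
    moreover have "0 \<in> ?T"
      using S by simp
    ultimately have "((\<lambda>s. pdiff F j (u + s *\<^sub>R axis i 1)) has_field_derivative Hm $ j $ i) (at 0)"
      by (rule has_field_derivative_transform_within_open[OF has_field_derivative_along_axis[OF dG]])
        (use pdiff_eq_gradient_nth[OF dF] in auto)
    then show ?thesis
      unfolding hessian_def by (simp add: pdiff_def[of "pdiff F j"] DERIV_imp_deriv)
  qed
  then show ?thesis
    by (simp add: vec_eq_iff transpose_def)
qed

definition chart_grad_L :: "real \<Rightarrow> real \<Rightarrow> real \<Rightarrow> real^4 \<Rightarrow> real^4" where
  "chart_grad_L R1 R2 e2 w = vector [
     - R1 * w$1 / (1 - (w$1)^2 - (w$2)^2), - R1 * w$2 / (1 - (w$1)^2 - (w$2)^2),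
     - e2 * R2 * w$3 / sqrt (1 - (w$3)^2 - (w$4)^2), - e2 * R2 * w$4 / sqrt (1 - (w$3)^2 - (w$4)^2)]"

definition chart_grad_H :: "real \<Rightarrow> real \<Rightarrow> real \<Rightarrow> real^4 \<Rightarrow> real^4" where
  "chart_grad_H t e1 e2 w = vector [
     - (1 - t) * w$1 / (1 - (w$1)^2 - (w$2)^2)
       + t * (w$3 - e1 * e2 * w$1 * sqrt (1 - (w$3)^2 - (w$4)^2) / sqrt (1 - (w$1)^2 - (w$2)^2)),
     - (1 - t) * w$2 / (1 - (w$1)^2 - (w$2)^2)
       + t * (w$4 - e1 * e2 * w$2 * sqrt (1 - (w$3)^2 - (w$4)^2) / sqrt (1 - (w$1)^2 - (w$2)^2)),
     t * (w$1 - e1 * e2 * w$3 * sqrt (1 - (w$1)^2 - (w$2)^2) / sqrt (1 - (w$3)^2 - (w$4)^2)),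
     t * (w$2 - e1 * e2 * w$4 * sqrt (1 - (w$1)^2 - (w$2)^2) / sqrt (1 - (w$3)^2 - (w$4)^2))]"

lemma chart_L_eq:
  assumes "\<bar>e1\<bar> = 1" "w \<in> chart_domain"
  shows "(Lfun R1 R2 \<circ> chart_inv e1 e2) w =
    R1 * (ln (1 - (w$1)^2 - (w$2)^2) / 2) + R2 * (e2 * sqrt (1 - (w$3)^2 - (w$4)^2))"
proof -
  have "0 < 1 - (w$1)^2 - (w$2)^2"
    using assms(2) by (auto simp: chart_domain_def)
  with assms(1) show ?thesis
    by (simp add: Lfun_def chart_inv_def abs_mult ln_sqrt)
qed

lemma chart_H_eq:
  assumes "\<bar>e1\<bar> = 1" "w \<in> chart_domain"
  shows "(Hfun t \<circ> chart_inv e1 e2) w =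
    (1 - t) * (ln (1 - (w$1)^2 - (w$2)^2) / 2) + t * (w$1 * w$3 + w$2 * w$4
      + e1 * e2 * (sqrt (1 - (w$1)^2 - (w$2)^2) * sqrt (1 - (w$3)^2 - (w$4)^2)))"
proof -
  have "0 < 1 - (w$1)^2 - (w$2)^2"
    using assms(2) by (auto simp: chart_domain_def)
  with assms(1) show ?thesis
    by (simp add: Hfun_def chart_inv_def abs_mult ln_sqrt field_simps)
qed

text \<open>The derivatives computed by derivative_eq_intros, regrouped into the gradients above. The
  denominators are kept as variables so that field_simps does not clear the square roots.\<close>

lemma chart_grad_L_regroup:
  fixes a b R1 R2 e2 h1 h2 h3 h4 x1 x2 x3 x4 :: real
  shows "R1 * (inverse a * (- (2 * h1 * x1) - 2 * h2 * x2)) / 2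
      + R2 * (e2 * ((- (2 * h3 * x3) - 2 * h4 * x4) * inverse b)) / 2
    = - (R1 * x1 * h1 / a) - R1 * x2 * h2 / a - e2 * R2 * x3 * h3 / b - e2 * R2 * x4 * h4 / b"
  by (simp add: inverse_eq_divide diff_divide_distrib add_divide_distrib) (simp add: field_simps)

lemma chart_grad_H_regroup:
  fixes T a sa sb e1 e2 h1 h2 h3 h4 x1 x2 x3 x4 :: real
  shows "(1 - T) * (inverse a * (- (2 * h1 * x1) - 2 * h2 * x2)) / 2 +
     T * (x1 * h3 + h1 * x3 + (x2 * h4 + h2 * x4) +
       e1 * e2 * (sa * ((- (2 * h3 * x3) - 2 * h4 * x4) * inverse sb) / 2 +
         (- (2 * h1 * x1) - 2 * h2 * x2) * inverse sa * sb / 2)) =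
   ((T - 1) * x1 / a + T * (x3 - e1 * e2 * x1 * sb / sa)) * h1 +
   ((T - 1) * x2 / a + T * (x4 - e1 * e2 * x2 * sb / sa)) * h2 +
   T * (x1 - e1 * e2 * x3 * sa / sb) * h3 +
   T * (x2 - e1 * e2 * x4 * sa / sb) * h4"
  by (cases "a = 0"; simp add: inverse_eq_divide diff_divide_distrib add_divide_distrib;
      simp add: field_simps)

lemma chart_L_has_derivative:
  assumes e1: "\<bar>e1\<bar> = 1" and w: "w \<in> chart_domain"
  shows "((Lfun R1 R2 \<circ> chart_inv e1 e2) has_derivative (\<lambda>h. chart_grad_L R1 R2 e2 w \<bullet> h)) (at w)"
proof (rule has_derivative_transform_within_open[OF _ open_chart_domain w chart_L_eq[OF e1, symmetric]])
  have pos: "0 < 1 - (w$1)^2 - (w$2)^2" "0 < 1 - (w$3)^2 - (w$4)^2"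
    using w by (auto simp: chart_domain_def)
  show "((\<lambda>w. R1 * (ln (1 - (w$1)^2 - (w$2)^2) / 2) + R2 * (e2 * sqrt (1 - (w$3)^2 - (w$4)^2)))
      has_derivative (\<lambda>h. chart_grad_L R1 R2 e2 w \<bullet> h)) (at w)"
    by (rule has_derivative_eq_rhs, (use pos in \<open>auto intro!: derivative_eq_intros\<close>)[1])
      (rule ext, simp add: chart_grad_L_def inner_vec_def sum_4 vector4_nth, rule chart_grad_L_regroup)
qed

lemma chart_H_has_derivative:
  assumes e1: "\<bar>e1\<bar> = 1" and w: "w \<in> chart_domain"
  shows "((Hfun t \<circ> chart_inv e1 e2) has_derivative (\<lambda>h. chart_grad_H t e1 e2 w \<bullet> h)) (at w)"
proof (rule has_derivative_transform_within_open[OF _ open_chart_domain w chart_H_eq[OF e1, symmetric]])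
  have pos: "0 < 1 - (w$1)^2 - (w$2)^2" "0 < 1 - (w$3)^2 - (w$4)^2"
    using w by (auto simp: chart_domain_def)
  show "((\<lambda>w. (1 - t) * (ln (1 - (w$1)^2 - (w$2)^2) / 2) + t * (w$1 * w$3 + w$2 * w$4
      + e1 * e2 * (sqrt (1 - (w$1)^2 - (w$2)^2) * sqrt (1 - (w$3)^2 - (w$4)^2))))
      has_derivative (\<lambda>h. chart_grad_H t e1 e2 w \<bullet> h)) (at w)"
    by (rule has_derivative_eq_rhs, (use pos in \<open>auto intro!: derivative_eq_intros\<close>)[1])
      (rule ext, simp add: chart_grad_H_def inner_vec_def sum_4 vector4_nth, rule chart_grad_H_regroup)
qed

lemma chart_grad_L_has_derivative_at_0:
  "((\<lambda>w. chart_grad_L R1 R2 e2 w $ j) has_derivative (\<lambda>h. blockI (-R1) 0 0 (-e2*R2) $ j \<bullet> h)) (at 0)"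
  using exhaust_4[of j]
  by (elim disjE) (simp only: chart_grad_L_def blockI_def vector4_nth,
    rule has_derivative_eq_rhs, (auto intro!: derivative_eq_intros)[1],
    simp add: inner_vec_def sum_4 vector4_nth)+

lemma chart_grad_H_has_derivative_at_0:
  "((\<lambda>w. chart_grad_H t e1 e2 w $ j) has_derivative
     (\<lambda>h. blockI (-(1-t) - t*e1*e2) t t (-t*e1*e2) $ j \<bullet> h)) (at 0)"
  using exhaust_4[of j]
  by (elim disjE) (simp only: chart_grad_H_def blockI_def vector4_nth,
    rule has_derivative_eq_rhs, (auto intro!: derivative_eq_intros)[1],
    simp add: inner_vec_def sum_4 vector4_nth algebra_simps)+

lemma hessian_chart_L_at_0:
  "\<bar>e1\<bar> = 1 \<Longrightarrow> hessian (Lfun R1 R2 \<circ> chart_inv e1 e2) 0 = blockI (-R1) 0 0 (-e2*R2)"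
  using hessian_eqI[OF open_chart_domain zero_in_chart_domain chart_L_has_derivative
      chart_grad_L_has_derivative_at_0]
  by (simp add: transpose_blockI)

lemma hessian_chart_H_at_0:
  "\<bar>e1\<bar> = 1 \<Longrightarrow> hessian (Hfun t \<circ> chart_inv e1 e2) 0 = blockI (-(1-t) - t*e1*e2) t t (-t*e1*e2)"
  using hessian_eqI[OF open_chart_domain zero_in_chart_domain chart_H_has_derivative
      chart_grad_H_has_derivative_at_0]
  by (simp add: transpose_blockI)

section \<open>Linearisation at the poles\<close>

lemma abs_eq_1_imp_square: "\<bar>e\<bar> = 1 \<Longrightarrow> e * e = (1::real)"
  by (metis abs_mult_self_eq mult_1_right)

lemma matrix_inv_eqI:
  fixes A B :: "'a::semiring_1^'n^'n"
  assumes "A ** B = mat 1" "B ** A = mat 1"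
  shows "matrix_inv A = B"
  unfolding matrix_inv_def
proof (rule some_equality)
  fix C assume "A ** C = mat 1 \<and> C ** A = mat 1"
  then have "C = C ** (A ** B)" "C ** A = mat 1"
    using assms by simp_all
  then show "C = B"
    by (simp add: matrix_mul_assoc)
qed (use assms in simp)

lemma chart_pole: "chart (pole e1 e2) = 0"
  by (simp add: chart_def pole_def vec_eq_iff forall_4 vector4_nth)

lemma linearisation_at_pole:
  assumes e: "\<bar>e1\<bar> = 1" "\<bar>e2\<bar> = 1" and R: "R1 \<noteq> 0" "R2 \<noteq> 0"
  shows "Omega R1 R2 e2 (chart (pole e1 e2)) = blockJ R1 0 0 (e2*R2)"
    and "A_L R1 R2 e1 e2 (chart (pole e1 e2)) = blockJ 1 0 0 1"
    and "A_H R1 R2 t e1 e2 (chart (pole e1 e2)) =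
      blockJ ((1 - t + t*e1*e2) / R1) (-t/R1) (-e2*t/R2) (e1*t/R2)"
proof -
  have e2_sq: "e2 * e2 = 1"
    using e(2) by (rule abs_eq_1_imp_square)
  have Omega: "Omega R1 R2 e2 0 = blockJ R1 0 0 (e2*R2)"
    by (simp add: Omega_def block_simps Let_def)
  then show "Omega R1 R2 e2 (chart (pole e1 e2)) = blockJ R1 0 0 (e2*R2)"
    by (simp add: chart_pole)
  have inv: "matrix_inv (Omega R1 R2 e2 0) = blockJ (-1/R1) 0 0 (-e2/R2)"
    unfolding Omega using R e2_sq
    by (intro matrix_inv_eqI) (simp_all add: blockJ_mult_blockJ blockI_one[symmetric] field_simps)
  show "A_L R1 R2 e1 e2 (chart (pole e1 e2)) = blockJ 1 0 0 1"
    unfolding A_L_def chart_pole inv hessian_chart_L_at_0[OF e(1)] blockJ_mult_blockI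
    using R e2_sq by (simp add: blockJ_eq_iff)
  show "A_H R1 R2 t e1 e2 (chart (pole e1 e2)) =
      blockJ ((1 - t + t*e1*e2) / R1) (-t/R1) (-e2*t/R2) (e1*t/R2)"
    unfolding A_H_def chart_pole inv hessian_chart_H_at_0[OF e(1)] blockJ_mult_blockI blockJ_eq_iff
    using R e2_sq by (simp add: field_simps)
qed

definition pole_disc :: "real \<Rightarrow> real \<Rightarrow> real \<Rightarrow> real \<Rightarrow> real \<Rightarrow> real" where
  "pole_disc R1 R2 t e1 e2 = discr ((1 - t + t*e1*e2) / R1) (-t/R1) (-e2*t/R2) (e1*t/R2)"

lemma pole_type:
  assumes e: "\<bar>e1\<bar> = 1" "\<bar>e2\<bar> = 1" and R: "0 < R1" "0 < R2"
  shows "pole_disc R1 R2 t e1 e2 > 0 \<Longrightarrow> nondeg_EE R1 R2 t e1 e2"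
    and "pole_disc R1 R2 t e1 e2 < 0 \<Longrightarrow> nondeg_FF R1 R2 t e1 e2"
    and "pole_disc R1 R2 t e1 e2 = 0 \<Longrightarrow> t \<noteq> 0 \<Longrightarrow> \<not> nondegenerate_at R1 R2 t (pole e1 e2) e1 e2"
proof -
  have e2_sq: "e2 * e2 = 1"
    using e(2) by (rule abs_eq_1_imp_square)
  have w: "R1 \<noteq> 0" "e2 * R2 \<noteq> 0" "R1 * (-t/R1) = (e2*R2) * (-e2*t/R2)"
    using R e e2_sq by (auto simp: field_simps)
  have "R1 \<noteq> 0" "R2 \<noteq> 0"
    using R by simp_all
  note lin = linearisation_at_pole[OF e this]
  have nondeg: "nondegenerate_at R1 R2 t (pole e1 e2) e1 e2" if "pole_disc R1 R2 t e1 e2 \<noteq> 0"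
    unfolding nondegenerate_at_def lin using cartan_pencil[OF w] that by (simp add: pole_disc_def)
  show "pole_disc R1 R2 t e1 e2 > 0 \<Longrightarrow> nondeg_EE R1 R2 t e1 e2"
    unfolding nondeg_EE_def lin using nondeg elliptic_elliptic_pencil by (simp add: pole_disc_def)
  show "pole_disc R1 R2 t e1 e2 < 0 \<Longrightarrow> nondeg_FF R1 R2 t e1 e2"
    unfolding nondeg_FF_def lin using nondeg focus_focus_pencil by (simp add: pole_disc_def)
  show "pole_disc R1 R2 t e1 e2 = 0 \<Longrightarrow> t \<noteq> 0 \<Longrightarrow> \<not> nondegenerate_at R1 R2 t (pole e1 e2) e1 e2"
    unfolding nondegenerate_at_def lin using not_cartan_pencil[OF w] R by (simp add: pole_disc_def)
qed

section \<open>The fixed points\<close>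

lemma ln_abs_eq_half_ln_square: "ln \<bar>x\<bar> = ln (x * x) / (2::real)"
proof (cases "x = 0")
  case False
  then have "ln (\<bar>x\<bar> * \<bar>x\<bar>) = ln \<bar>x\<bar> + ln \<bar>x\<bar>"
    by (simp add: ln_mult del: abs_mult_self_eq)
  then show ?thesis by simp
qed simp

lemma has_derivative_zero_along_curve:
  fixes f :: "'a::real_normed_vector \<Rightarrow> real" and \<gamma> :: "real \<Rightarrow> 'a"
  assumes df: "(f has_derivative (\<lambda>_. 0)) (at p within S)"
    and \<gamma>: "\<gamma> differentiable (at 0)" "\<And>s. \<gamma> s \<in> S" "\<gamma> 0 = p"
    and D: "((\<lambda>s. f (\<gamma> s)) has_real_derivative D) (at 0)"
  shows "D = 0"
proof -
  obtain \<gamma>' where d\<gamma>: "(\<gamma> has_derivative \<gamma>') (at 0)"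
    using \<gamma>(1) unfolding differentiable_def by blast
  have "(f has_derivative (\<lambda>_. 0)) (at (\<gamma> 0) within range \<gamma>)"
    using has_derivative_subset[OF df] \<gamma>(2,3) by blast
  from diff_chain_within[OF d\<gamma> this]
  have "((\<lambda>s. f (\<gamma> s)) has_derivative (\<lambda>_. 0)) (at 0)"
    by (simp add: o_def)
  moreover have "((\<lambda>s. f (\<gamma> s)) has_derivative (\<lambda>x. D * x)) (at 0)"
    using D by (simp add: has_field_derivative_def)
  ultimately have "(\<lambda>_::real. 0::real) = (\<lambda>x. D * x)"
    by (rule has_derivative_unique)
  then show "D = 0"
    by (metis mult_1_right)
qed

lemma S2_rotate:
  assumes "(x, y, z) \<in> S2"
  shows "(x * cos s - z * sin s, y, x * sin s + z * cos s) \<in> S2"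
    and "(x, y * cos s - z * sin s, y * sin s + z * cos s) \<in> S2"
proof -
  have "(u * cos s - z * sin s)^2 + (u * sin s + z * cos s)^2 = u^2 + z^2" for u
    using sin_cos_squared_add3[of s] by algebra
  then show "(x * cos s - z * sin s, y, x * sin s + z * cos s) \<in> S2"
    and "(x, y * cos s - z * sin s, y * sin s + z * cos s) \<in> S2"
    using assms unfolding S2_def by (simp_all add: algebra_simps)
qed

lemma Lfun_eq_ln_square: "Lfun R1 R2 ((a, b, c), (d, e, f)) = R1 * (ln (c * c) / 2) + R2 * f"
  by (simp add: Lfun_def ln_abs_eq_half_ln_square)

text \<open>At a fixed point, L is stationary along the rotations of either factor in the (x, z)- and
  (y, z)-planes, whose derivatives are R1 x1/z1, R1 y1/z1, R2 x2 and R2 y2.\<close>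

lemma fixed_point_first_factor_on_axis:
  assumes dL: "(Lfun R1 R2 has_derivative (\<lambda>_. 0)) (at ((x1, y1, z1), (x2, y2, z2)) within Mspace)"
    and q1: "(x1, y1, z1) \<in> S2" and q2: "(x2, y2, z2) \<in> S2" and "z1 \<noteq> 0" "R1 \<noteq> 0"
  shows "x1 = 0" "y1 = 0"
proof -
  have z1: "0 < z1 * z1"
    using \<open>z1 \<noteq> 0\<close> not_real_square_gt_zero by blast
  have "R1 * x1 / z1 = 0"
  proof (rule has_derivative_zero_along_curve[OF dL])
    show "(\<lambda>s. ((x1 * cos s - z1 * sin s, y1, x1 * sin s + z1 * cos s), (x2, y2, z2)))
        differentiable (at 0)"
      unfolding differentiable_def by (rule exI) (rule derivative_intros)+
    show "((x1 * cos s - z1 * sin s, y1, x1 * sin s + z1 * cos s), (x2, y2, z2)) \<in> Mspace" for s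
      using S2_rotate(1)[OF q1] q2 by (simp add: Mspace_def)
    show "((\<lambda>s. Lfun R1 R2 ((x1 * cos s - z1 * sin s, y1, x1 * sin s + z1 * cos s), (x2, y2, z2)))
        has_real_derivative R1 * x1 / z1) (at 0)"
      unfolding Lfun_eq_ln_square
      by (rule DERIV_cong) (rule derivative_eq_intros refl | simp add: z1)+
  qed simp
  moreover have "R1 * y1 / z1 = 0"
  proof (rule has_derivative_zero_along_curve[OF dL])
    show "(\<lambda>s. ((x1, y1 * cos s - z1 * sin s, y1 * sin s + z1 * cos s), (x2, y2, z2)))
        differentiable (at 0)"
      unfolding differentiable_def by (rule exI) (rule derivative_intros)+
    show "((x1, y1 * cos s - z1 * sin s, y1 * sin s + z1 * cos s), (x2, y2, z2)) \<in> Mspace" for s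
      using S2_rotate(2)[OF q1] q2 by (simp add: Mspace_def)
    show "((\<lambda>s. Lfun R1 R2 ((x1, y1 * cos s - z1 * sin s, y1 * sin s + z1 * cos s), (x2, y2, z2)))
        has_real_derivative R1 * y1 / z1) (at 0)"
      unfolding Lfun_eq_ln_square
      by (rule DERIV_cong) (rule derivative_eq_intros refl | simp add: z1)+
  qed simp
  ultimately show "x1 = 0" "y1 = 0"
    using \<open>z1 \<noteq> 0\<close> \<open>R1 \<noteq> 0\<close> by simp_all
qed

lemma fixed_point_second_factor_on_axis:
  assumes dL: "(Lfun R1 R2 has_derivative (\<lambda>_. 0)) (at ((x1, y1, z1), (x2, y2, z2)) within Mspace)"
    and q1: "(x1, y1, z1) \<in> S2" and q2: "(x2, y2, z2) \<in> S2" and "R2 \<noteq> 0"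
  shows "x2 = 0" "y2 = 0"
proof -
  have "R2 * x2 = 0"
  proof (rule has_derivative_zero_along_curve[OF dL])
    show "(\<lambda>s. ((x1, y1, z1), (x2 * cos s - z2 * sin s, y2, x2 * sin s + z2 * cos s)))
        differentiable (at 0)"
      unfolding differentiable_def by (rule exI) (rule derivative_intros)+
    show "((x1, y1, z1), (x2 * cos s - z2 * sin s, y2, x2 * sin s + z2 * cos s)) \<in> Mspace" for s
      using q1 S2_rotate(1)[OF q2] by (simp add: Mspace_def)
    show "((\<lambda>s. Lfun R1 R2 ((x1, y1, z1), (x2 * cos s - z2 * sin s, y2, x2 * sin s + z2 * cos s)))
        has_real_derivative R2 * x2) (at 0)"
      unfolding Lfun_eq_ln_square
      by (rule DERIV_cong) (rule derivative_eq_intros refl | simp)+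
  qed simp
  moreover have "R2 * y2 = 0"
  proof (rule has_derivative_zero_along_curve[OF dL])
    show "(\<lambda>s. ((x1, y1, z1), (x2, y2 * cos s - z2 * sin s, y2 * sin s + z2 * cos s)))
        differentiable (at 0)"
      unfolding differentiable_def by (rule exI) (rule derivative_intros)+
    show "((x1, y1, z1), (x2, y2 * cos s - z2 * sin s, y2 * sin s + z2 * cos s)) \<in> Mspace" for s
      using q1 S2_rotate(2)[OF q2] by (simp add: Mspace_def)
    show "((\<lambda>s. Lfun R1 R2 ((x1, y1, z1), (x2, y2 * cos s - z2 * sin s, y2 * sin s + z2 * cos s)))
        has_real_derivative R2 * y2) (at 0)"
      unfolding Lfun_eq_ln_square
      by (rule DERIV_cong) (rule derivative_eq_intros refl | simp)+
  qed simp
  ultimately show "x2 = 0" "y2 = 0"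
    using \<open>R2 \<noteq> 0\<close> by simp_all
qed

lemma fixed_point_is_pole:
  assumes "is_fixed_point R1 R2 t p" "R1 \<noteq> 0" "R2 \<noteq> 0"
  shows "\<exists>e1 e2. \<bar>e1\<bar> = 1 \<and> \<bar>e2\<bar> = 1 \<and> p = pole e1 e2"
proof -
  obtain x1 y1 z1 x2 y2 z2 where p: "p = ((x1, y1, z1), (x2, y2, z2))"
    by (metis prod.collapse)
  have q: "(x1, y1, z1) \<in> S2" "(x2, y2, z2) \<in> S2" and "z1 \<noteq> 0"
    and dL: "(Lfun R1 R2 has_derivative (\<lambda>_. 0)) (at p within Mspace)"
    using assms(1) unfolding is_fixed_point_def p by (auto simp: z1_of_def Mspace_def)
  note axes = fixed_point_first_factor_on_axis[OF dL[unfolded p] q \<open>z1 \<noteq> 0\<close> assms(2)]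
    fixed_point_second_factor_on_axis[OF dL[unfolded p] q assms(3)]
  then have "z1^2 = 1" "z2^2 = 1"
    using q by (auto simp: S2_def)
  then have "\<bar>z1\<bar> = 1" "\<bar>z2\<bar> = 1"
    by (auto simp: power2_eq_1_iff)
  with axes show ?thesis
    unfolding p pole_def by blast
qed

lemma S2_near_pole:
  assumes "(x, y, z) \<in> S2" "\<bar>e\<bar> = 1" "dist (x, y, z) (0, 0, e) < 1"
  shows "z = e * sqrt (1 - x^2 - y^2)"
proof -
  have "sqrt (1 - x^2 - y^2) = \<bar>z\<bar>"
    using assms(1) by (simp add: S2_def flip: real_sqrt_abs)
  moreover have "\<bar>z - e\<bar> < 1"
    using dist_snd_le[of "(y, z)" "(0, e)"] dist_snd_le[of "(x, y, z)" "(0, 0, e)"] assms(3)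
    by (simp add: dist_real_def)
  ultimately show ?thesis
    using assms(2) by (auto simp: abs_if split: if_splits)
qed

lemma Mspace_near_pole:
  assumes "((x1, y1, z1), (x2, y2, z2)) \<in> Mspace" "\<bar>e1\<bar> = 1" "\<bar>e2\<bar> = 1"
    and "dist ((x1, y1, z1), (x2, y2, z2)) (pole e1 e2) < 1"
  shows "z1 = e1 * sqrt (1 - x1^2 - y1^2)" "z2 = e2 * sqrt (1 - x2^2 - y2^2)"
  using assms S2_near_pole dist_fst_le[of "((x1, y1, z1), (x2, y2, z2))" "pole e1 e2"]
    dist_snd_le[of "((x1, y1, z1), (x2, y2, z2))" "pole e1 e2"]
  by (auto simp: Mspace_def pole_def)

text \<open>Near a pole the sphere is the graph z = e sqrt(1 - x^2 - y^2), on which L and H extend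
  to smooth functions of all six coordinates that are critical at the pole.\<close>

lemma pole_is_fixed_point:
  assumes e: "\<bar>e1\<bar> = 1" "\<bar>e2\<bar> = 1"
  shows "is_fixed_point R1 R2 t (pole e1 e2)"
proof -
  define r :: "real \<Rightarrow> real \<Rightarrow> real" where "r x y = sqrt (1 - x^2 - y^2)" for x y
  define FL :: "pt \<Rightarrow> real" where
    "FL q = R1 * ln (r (fst (fst q)) (fst (snd (fst q))))
      + R2 * (e2 * r (fst (snd q)) (fst (snd (snd q))))"
    for q
  define FH :: "pt \<Rightarrow> real" where
    "FH q = (1 - t) * ln (r (fst (fst q)) (fst (snd (fst q)))) + t * (fst (fst q) * fst (snd q)
      + fst (snd (fst q)) * fst (snd (snd q))
      + e1 * e2 * (r (fst (fst q)) (fst (snd (fst q))) * r (fst (snd q)) (fst (snd (snd q)))))"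
    for q
  have on_M: "Lfun R1 R2 q = FL q \<and> Hfun t q = FH q"
    if "q \<in> Mspace" "dist q (pole e1 e2) < 1" for q
  proof -
    obtain x1 y1 z1 x2 y2 z2 where q: "q = ((x1, y1, z1), (x2, y2, z2))"
      by (metis prod.collapse)
    have "x1^2 + y1^2 + z1^2 = 1"
      using that(1) by (simp add: q Mspace_def S2_def)
    then have "0 \<le> 1 - x1^2 - y1^2"
      using zero_le_power2[of z1] by linarith
    then show ?thesis
      using Mspace_near_pole[OF that(1)[unfolded q] e that(2)[unfolded q]] e
      by (simp add: q Lfun_def Hfun_def FL_def FH_def r_def abs_mult)
  qed
  have pole: "pole e1 e2 \<in> Mspace"
    using e by (simp add: pole_def Mspace_def S2_def power2_eq_square abs_eq_1_imp_square)
  have "(FL has_derivative (\<lambda>_. 0)) (at (pole e1 e2))"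
    unfolding FL_def r_def
    by (rule has_derivative_eq_rhs) (rule derivative_eq_intros refl | simp add: pole_def)+
  then have "(Lfun R1 R2 has_derivative (\<lambda>_. 0)) (at (pole e1 e2) within Mspace)"
    by (rule has_derivative_transform_within[OF has_derivative_at_withinI zero_less_one pole])
      (use on_M in auto)
  moreover have "(FH has_derivative (\<lambda>_. 0)) (at (pole e1 e2))"
    unfolding FH_def r_def
    by (rule has_derivative_eq_rhs) (rule derivative_eq_intros refl | simp add: pole_def)+
  then have "(Hfun t has_derivative (\<lambda>_. 0)) (at (pole e1 e2) within Mspace)"
    by (rule has_derivative_transform_within[OF has_derivative_at_withinI zero_less_one pole])
      (use on_M in auto)
  ultimately show ?thesis
    unfolding is_fixed_point_def using pole e by (auto simp: z1_of_def pole_def)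
qed

lemma fixed_points_eq_poles:
  assumes "R1 \<noteq> 0" "R2 \<noteq> 0"
  shows "{p. is_fixed_point R1 R2 t p} = {pole 1 1, pole (-1) 1, pole (-1) (-1), pole 1 (-1)}"
proof
  show "{p. is_fixed_point R1 R2 t p} \<subseteq> {pole 1 1, pole (-1) 1, pole (-1) (-1), pole 1 (-1)}"
  proof
    fix p assume "p \<in> {p. is_fixed_point R1 R2 t p}"
    then obtain e1 e2 where "\<bar>e1\<bar> = 1" "\<bar>e2\<bar> = 1" "p = pole e1 e2"
      using fixed_point_is_pole[OF _ assms] by blast
    then show "p \<in> {pole 1 1, pole (-1) 1, pole (-1) (-1), pole 1 (-1)}"
      by (auto simp: abs_if split: if_splits)
  qed
  show "{pole 1 1, pole (-1) 1, pole (-1) (-1), pole 1 (-1)} \<subseteq> {p. is_fixed_point R1 R2 t p}"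
    using pole_is_fixed_point[of 1 1] pole_is_fixed_point[of "-1" 1] pole_is_fixed_point[of "-1" "-1"]
      pole_is_fixed_point[of 1 "-1"] by auto
qed

section \<open>The discriminant at the poles\<close>

lemma pole_disc_pos:
  assumes R: "0 < R1" "R1 < R2" and t: "0 \<le> t" "t \<le> 1"
    and e: "(e1, e2) \<in> {(1, 1), (-1, 1), (-1, -1)}"
  shows "pole_disc R1 R2 t e1 e2 > 0"
proof -
  have "0 < R2" using R by linarith
  have "pole_disc R1 R2 t e1 1 > 0" if "e1 = 1 \<or> e1 = -1"
  proof (cases "t = 0")
    case True
    then show ?thesis using R by (simp add: pole_disc_def discr_def)
  next
    case False
    then have "0 < t * t"
      using not_real_square_gt_zero by blast
    then have "4 * (-t/R1) * (-t/R2) > 0"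
      using R \<open>0 < R2\<close> by (simp add: zero_less_mult_iff)
    then show ?thesis
      unfolding pole_disc_def discr_def by (smt (verit) zero_le_power2)
  qed
  moreover have "pole_disc R1 R2 t (-1) (-1) = ((R2 - t*R1)^2 + 4*t*R1*R2*(1 - t)) / (R1*R2)^2"
    using R \<open>0 < R2\<close> by (simp add: pole_disc_def discr_def field_simps power2_eq_square)
  moreover have "(R2 - t*R1)^2 + 4*t*R1*R2*(1 - t) > 0"
  proof -
    have "t*R1 < R2" using R t by (smt (verit) mult_left_le_one_le)
    then show ?thesis using R t by (simp add: add_pos_nonneg)
  qed
  ultimately show ?thesis
    using e R by auto
qed

lemma two_sqrt_mult_less:
  assumes "0 < R1" "0 < R2"
  shows "2 * sqrt (R1 * R2) < 2*R2 + R1"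
proof -
  have "sqrt (R1 * R2) \<le> (R1 + R2) / 2"
    using assms by (intro arith_geo_mean_sqrt) auto
  then show ?thesis
    using assms by (simp add: field_simps)
qed

lemma t_minus_t_plus_pos:
  assumes "0 < R1" "0 < R2"
  shows "0 < t_minus R1 R2" "t_minus R1 R2 < t_plus R1 R2"
proof -
  define cm where "cm = 2*R2 + R1 + 2 * sqrt (R1 * R2)"
  define cp where "cp = 2*R2 + R1 - 2 * sqrt (R1 * R2)"
  have "0 < cp"
    unfolding cp_def using two_sqrt_mult_less[OF assms] by linarith
  moreover have "cp < cm"
    unfolding cm_def cp_def using assms by simp
  ultimately show "0 < t_minus R1 R2" "t_minus R1 R2 < t_plus R1 R2"
    unfolding t_minus_def t_plus_def cm_def[symmetric] cp_def[symmetric]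
    using assms(2) by (simp_all add: divide_strict_left_mono)
qed

lemma pole_disc_plus_minus:
  assumes "0 < R1" "R1 < R2"
  shows "pole_disc R1 R2 t 1 (-1) =
    (t_minus R1 R2 - t) * (t_plus R1 R2 - t) / (R1^2 * t_minus R1 R2 * t_plus R1 R2)"
proof -
  define q where "q = sqrt (R1 * R2)"
  define cm where "cm = 2*R2 + R1 + 2*q"
  define cp where "cp = 2*R2 + R1 - 2*q"
  have "0 < R2" using assms by linarith
  have qq: "q * q = R1 * R2"
    unfolding q_def using assms \<open>0 < R2\<close> by simp
  have "0 < cp"
    using two_sqrt_mult_less[OF assms(1) \<open>0 < R2\<close>] unfolding cp_def q_def by linarith
  moreover have "0 < cm"
    unfolding cm_def q_def using assms \<open>0 < R2\<close> by (intro add_pos_pos) simp_all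
  note pos = this calculation
  have "(R2 - t*cm) * (R2 - t*cp) = ((1 - 2*t)*R2 - t*R1)^2 - 4*t*t*(R1*R2)"
    unfolding cm_def cp_def qq[symmetric] by (simp add: algebra_simps power2_eq_square)
  moreover have "pole_disc R1 R2 t 1 (-1) = (((1 - 2*t)*R2 - t*R1)^2 - 4*t*t*(R1*R2)) / (R1*R2)^2"
    unfolding pole_disc_def discr_def using assms \<open>0 < R2\<close> by (simp add: field_simps power2_eq_square)
  ultimately have "pole_disc R1 R2 t 1 (-1) = (R2 - t*cm) * (R2 - t*cp) / (R1*R2)^2"
    by simp
  also have "\<dots> = (R2/cm - t) * (R2/cp - t) / (R1^2 * (R2/cm) * (R2/cp))"
    using assms \<open>0 < R2\<close> pos by (simp add: field_simps power2_eq_square)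
  finally show ?thesis
    unfolding t_minus_def t_plus_def cm_def cp_def q_def .
qed

lemma pole_disc_plus_minus_sign:
  assumes R: "0 < R1" "R1 < R2"
  shows "t < t_minus R1 R2 \<or> t_plus R1 R2 < t \<Longrightarrow> pole_disc R1 R2 t 1 (-1) > 0"
    and "t_minus R1 R2 < t \<Longrightarrow> t < t_plus R1 R2 \<Longrightarrow> pole_disc R1 R2 t 1 (-1) < 0"
    and "t = t_minus R1 R2 \<or> t = t_plus R1 R2 \<Longrightarrow> pole_disc R1 R2 t 1 (-1) = 0"
proof -
  have "0 < R2"
    using R by linarith
  note t_pos = t_minus_t_plus_pos[OF R(1) this]
  then have den: "0 < R1^2 * t_minus R1 R2 * t_plus R1 R2"
    using R by simp
  show "t < t_minus R1 R2 \<or> t_plus R1 R2 < t \<Longrightarrow> pole_disc R1 R2 t 1 (-1) > 0"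
    unfolding pole_disc_plus_minus[OF R] using den t_pos
    by (auto simp: zero_less_divide_iff zero_less_mult_iff)
  show "t_minus R1 R2 < t \<Longrightarrow> t < t_plus R1 R2 \<Longrightarrow> pole_disc R1 R2 t 1 (-1) < 0"
    unfolding pole_disc_plus_minus[OF R] using den
    by (auto simp: divide_less_0_iff mult_less_0_iff)
  show "t = t_minus R1 R2 \<or> t = t_plus R1 R2 \<Longrightarrow> pole_disc R1 R2 t 1 (-1) = 0"
    unfolding pole_disc_plus_minus[OF R] by auto
qed

theorem proposition5p7:
  fixes R1 R2 t :: real
  assumes "0 < R1" and "R1 < R2" and "0 \<le> t" and "t \<le> 1"
  shows "{p. is_fixed_point R1 R2 t p} = {pole 1 1, pole (-1) 1, pole (-1) (-1), pole 1 (-1)}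
    \<and> nondeg_EE R1 R2 t 1 1 \<and> nondeg_EE R1 R2 t (-1) 1 \<and> nondeg_EE R1 R2 t (-1) (-1)
    \<and> ((t < t_minus R1 R2 \<or> t > t_plus R1 R2) \<longrightarrow> nondeg_EE R1 R2 t 1 (-1))
    \<and> ((t_minus R1 R2 < t \<and> t < t_plus R1 R2) \<longrightarrow> nondeg_FF R1 R2 t 1 (-1))
    \<and> ((t = t_minus R1 R2 \<or> t = t_plus R1 R2) \<longrightarrow>
          \<not> nondegenerate_at R1 R2 t (pole 1 (-1)) 1 (-1))"
proof -
  have R: "0 < R1" "0 < R2"
    using assms by linarith+
  have EE: "nondeg_EE R1 R2 t e1 e2" if "(e1, e2) \<in> {(1, 1), (-1, 1), (-1, -1)}" for e1 e2
    using pole_type(1)[OF _ _ R] pole_disc_pos[OF assms that] that by auto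
  have "t \<noteq> 0" if "t = t_minus R1 R2 \<or> t = t_plus R1 R2"
    using that t_minus_t_plus_pos[OF R] by auto
  then show ?thesis
    using fixed_points_eq_poles[of R1 R2 t] R EE pole_type[of 1 "-1", OF _ _ R]
      pole_disc_plus_minus_sign[OF assms(1,2)] by auto
qed

end
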